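(* Let $U$ be a reasonably elastic utility function with conjugate $V$, let $\Lambda'\subseteq\Lambda_M$ be $V$-relatively compact, and let $\tau$ be an appropriate topology. Let $Y$ be a random variable bounded from below by a strictly positive constant such that $\sup_{\lambda\in\Lambda'}\mathbb{E}[Z^\lambda_TY]<\infty$. Then the mapping $(y,\lambda)\mapsto V(yZ^\lambda_TY)$ is continuous from $(0,\infty)\times\Lambda'$ (with the product of the Euclidean topology and $\tau$) into $\mathbb{L}^1(\mathbb{P})$. In particular, $(y,\lambda)\mapsto\mathbb{E}[V(yZ^\lambda_TY)]$ is continuous.
   Context: Let $(\Omega,\mathcal{F},\mathbb{P})$ be a complete probability space with a filtration $(\mathcal{F}_t)_{t\in[0,T]}$ satisfying the usual conditions, $T>0$ fixed. Let $M$ be a continuous local martingale with quadratic variation $\langle M\rangle$. $\Lambda$ is the set of predictable processes $\lambda$ with $\int_0^T\lambda_u^2\,d\langle M\rangle_u<\infty$ a.s. For $\lambda\in\Lambda$ let $S^\lambda_t=1+M_t+\int_0^t\lambda_u\,d\langle M\rangle_u$ and $Z^\lambda_t=\exp\big(-\int_0^t\lambda_u\,dM_u-\tfrac12\int_0^t\lambda_u^2\,d\langle M\rangle_u\big)$. $\Lambda_M$ is the set of $\lambda\in\Lambda$ for which $S^\lambda$ satisfies No Free Lunch with Vanishing Risk. A reasonably elastic utility function is a strictly concave, strictly increasing $C^1$ function $U:(0,\infty)\to\mathbb{R}$ with $\lim_{x\to0}U'(x)=\infty$, $\lim_{x\to\infty}U'(x)=0$, and $AE[U]<1$, where $AE[U]=\limsup_{x\to\infty}xU'(x)/U(x)$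 if $\lim_{x\to\infty}U(x)=+\infty$ and $AE[U]=0$ otherwise; $V(y)=\sup_{x>0}(U(x)-xy)$. A metrizable topology $\tau$ on $\Lambda$ is appropriate if $\lambda\mapsto Z^\lambda_T$ is continuous from $(\Lambda,\tau)$ into random variables with convergence in probability. A subset $\Lambda'\subseteq\Lambda$ is $V$-relatively compact if $\{V(Z^\lambda_T):\lambda\in\Lambda'\}$ is uniformly integrable. *)

theory Defs
  imports "HOL-Probability.Probability"
begin

definition strictly_concave_on :: "real set \<Rightarrow> (real \<Rightarrow> real) \<Rightarrow> bool" where
  "strictly_concave_on S f \<longleftrightarrow>
     (\<forall>x\<in>S. \<forall>y\<in>S. \<forall>t::real. x \<noteq> y \<and> 0 < t \<and> t < 1 \<longrightarrow>
        f (t * x + (1 - t) * y) > t * f x + (1 - t) * f y)"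

definition asymptotic_elasticity :: "(real \<Rightarrow> real) \<Rightarrow> ereal" where
  "asymptotic_elasticity U =
     (if filterlim U at_top at_top
      then Limsup at_top (\<lambda>x. ereal (x * deriv U x / U x))
      else 0)"

definition reasonably_elastic :: "(real \<Rightarrow> real) \<Rightarrow> bool" where
  "reasonably_elastic U \<longleftrightarrow>
     strictly_concave_on {0<..} U \<and>
     strict_mono_on {0<..} U \<and>
     (\<forall>x>0. U differentiable (at x)) \<and>
     continuous_on {0<..} (deriv U) \<and>
     filterlim (deriv U) at_top (at_right 0) \<and>
     ((deriv U) \<longlongrightarrow> 0) at_top \<and>
     asymptotic_elasticity U < 1"

definition conjugate :: "(real \<Rightarrow> real) \<Rightarrow> real \<Rightarrow> real" where
  "conjugate U y = (SUP x\<in>{0<..}. U x - x * y)"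

definition unif_integrable :: "'a measure \<Rightarrow> ('a \<Rightarrow> real) set \<Rightarrow> bool" where
  "unif_integrable M F \<longleftrightarrow>
     (\<forall>f\<in>F. f \<in> borel_measurable M) \<and>
     ((\<lambda>K::real. SUP f\<in>F. \<integral>\<^sup>+ x. ennreal (\<bar>f x\<bar> * indicator {x. \<bar>f x\<bar> > K} x) \<partial>M)
        \<longlongrightarrow> 0) at_top"

text \<open>A metrizable topology tau on Lambda (= topspace tau) is appropriate for the family
  Z (lambda \<mapsto> Z^lambda_T) if lambda \<mapsto> Z lambda is continuous into random variables
  with the topology of convergence in probability.\<close>
definition appropriate_topology ::
  "'a measure \<Rightarrow> 'l topology \<Rightarrow> ('l \<Rightarrow> 'a \<Rightarrow> real) \<Rightarrow> bool" where
  "appropriate_topology M \<tau> Z \<longleftrightarrow>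
     metrizable_space \<tau> \<and>
     (\<forall>l0\<in>topspace \<tau>. \<forall>e>0. \<exists>N. openin \<tau> N \<and> l0 \<in> N \<and>
        (\<forall>l\<in>N. measure M {\<omega>\<in>space M. \<bar>Z l \<omega> - Z l0 \<omega>\<bar> > e} < e))"

end

theory Submission
  imports Defs
begin

text \<open>The conjugate \<open>V\<close> is convex, hence continuous on \<open>(0, \<infinity>)\<close>, and antitone. It is bounded
  below by \<open>U \<epsilon> - \<epsilon> w\<close>, and, because the asymptotic elasticity of \<open>U\<close> is below \<open>1\<close>, every
  rescaling satisfies \<open>V (\<mu> z) \<le> K\<^sub>1 \<bar>V z\<bar> + K\<^sub>2\<close>. As \<open>Y \<ge> c\<close>, the variables \<open>\<bar>V (y Z\<^sub>\<lambda> Y)\<bar>\<close> with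
  \<open>y\<close> bounded away from \<open>0\<close> are dominated by \<open>K\<^sub>1 \<bar>V Z\<^sub>\<lambda>\<bar> + K + \<epsilon> y Z\<^sub>\<lambda> Y\<close>; the first term is
  uniformly integrable by hypothesis and the last has expectation at most \<open>\<epsilon> y sup E[Z Y]\<close>, so
  the family is uniformly integrable too.

  For \<open>L\<^sup>1\<close>-continuity at \<open>(y\<^sub>0, \<lambda>\<^sub>0)\<close>, discard a set of small probability outside of which \<open>Y\<close>,
  \<open>Z\<^sub>\<lambda>\<^sub>0\<close> and \<open>1 / Z\<^sub>\<lambda>\<^sub>0\<close> are bounded and \<open>Z\<^sub>\<lambda>\<close> is close to \<open>Z\<^sub>\<lambda>\<^sub>0\<close> (convergence in probability).
  There both arguments of \<open>V\<close> lie in a compact subinterval of \<open>(0, \<infinity>)\<close>, where \<open>V\<close> is uniformly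
  continuous; on the discarded set, uniform integrability makes both integrals small.\<close>

lemma product_perturbation:
  fixes y y0 z z0 v c R :: real
  assumes R: "1 \<le> R" and v: "0 < c" "c \<le> v" "v \<le> R" and z0: "0 < z0" "z0 \<le> R" "1 / z0 \<le> R"
    and z: "\<bar>z - z0\<bar> \<le> 1 / (2 * R)" and y: "0 < y0" "\<bar>y - y0\<bar> \<le> y0 / 2"
  shows "y0 * c / (4 * R) \<le> y * z * v" "y * z * v \<le> 2 * y0 * (R + 1) * R"
    and "\<bar>y * z * v - y0 * z0 * v\<bar> \<le> \<bar>y - y0\<bar> * ((R + 1) * R) + y0 * R * \<bar>z - z0\<bar>"
proof -
  have "1 / R \<le> z0" using z0 R by (simp add: field_simps)
  moreover have "1 / R - 1 / (2 * R) = 1 / (2 * R)" "1 / (2 * R) \<le> 1" using R by (simp_all add: field_simps)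
  ultimately have z_bounds: "1 / (2 * R) \<le> z" "z \<le> R + 1"
    using z z0(2) unfolding abs_le_iff by linarith+
  have y_bounds: "y0 / 2 \<le> y" "y \<le> 2 * y0" using y unfolding abs_le_iff by linarith+
  have "0 < 1 / (2 * R)" using R by simp
  then have pos: "0 < 1 / (2 * R)" "0 < z" "0 < y" using y(1) z_bounds y_bounds by linarith+
  have "y0 * c / (4 * R) = y0 / 2 * (1 / (2 * R)) * c" by simp
  also have "\<dots> \<le> y * z * v"
    using y_bounds z_bounds v pos y(1) by (intro mult_mono) auto
  finally show "y0 * c / (4 * R) \<le> y * z * v" .
  show "y * z * v \<le> 2 * y0 * (R + 1) * R"
    using y_bounds z_bounds v pos y(1) by (intro mult_mono) auto
  have "y * z * v - y0 * z0 * v = (y - y0) * (z * v) + y0 * v * (z - z0)" by (simp add: algebra_simps)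
  then have "\<bar>y * z * v - y0 * z0 * v\<bar> \<le> \<bar>(y - y0) * (z * v)\<bar> + \<bar>y0 * v * (z - z0)\<bar>"
    by (metis abs_triangle_ineq)
  also have "\<dots> = \<bar>y - y0\<bar> * (z * v) + y0 * v * \<bar>z - z0\<bar>"
    using pos v y(1) by (simp add: abs_mult)
  also have "\<dots> \<le> \<bar>y - y0\<bar> * ((R + 1) * R) + y0 * R * \<bar>z - z0\<bar>"
    using z_bounds v y(1) pos by (intro add_mono mult_left_mono mult_right_mono mult_mono) auto
  finally show "\<bar>y * z * v - y0 * z0 * v\<bar> \<le> \<bar>y - y0\<bar> * ((R + 1) * R) + y0 * R * \<bar>z - z0\<bar>" .
qed

lemma nn_integral_abs_indicator_le:
  fixes f :: "'a \<Rightarrow> real"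
  assumes [measurable]: "f \<in> borel_measurable M" "A \<in> sets M" and "0 \<le> K"
  shows "(\<integral>\<^sup>+\<omega>. ennreal (\<bar>f \<omega>\<bar> * indicator A \<omega>) \<partial>M)
     \<le> (\<integral>\<^sup>+\<omega>. ennreal (\<bar>f \<omega>\<bar> * indicator {\<omega>. K < \<bar>f \<omega>\<bar>} \<omega>) \<partial>M) + ennreal K * emeasure M A"
proof -
  have "(\<integral>\<^sup>+\<omega>. ennreal (\<bar>f \<omega>\<bar> * indicator A \<omega>) \<partial>M)
     \<le> (\<integral>\<^sup>+\<omega>. ennreal (\<bar>f \<omega>\<bar> * indicator {\<omega>. K < \<bar>f \<omega>\<bar>} \<omega>) + ennreal K * indicator A \<omega> \<partial>M)"
    by (intro nn_integral_mono) (auto simp: indicator_def ennreal_leI)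
  also have "\<dots> = (\<integral>\<^sup>+\<omega>. ennreal (\<bar>f \<omega>\<bar> * indicator {\<omega>. K < \<bar>f \<omega>\<bar>} \<omega>) \<partial>M) + ennreal K * emeasure M A"
    by (subst nn_integral_add) (auto simp: nn_integral_cmult_indicator)
  finally show ?thesis .
qed

lemma unif_integrable_indicator_le:
  assumes UI: "unif_integrable M F" and "0 < t"
  obtains K where "0 \<le> K" "\<And>f A. f \<in> F \<Longrightarrow> A \<in> sets M \<Longrightarrow>
    (\<integral>\<^sup>+\<omega>. ennreal (\<bar>f \<omega>\<bar> * indicator A \<omega>) \<partial>M) \<le> ennreal t + ennreal K * emeasure M A"
proof -
  let ?tail = "\<lambda>K f. \<integral>\<^sup>+ x. ennreal (\<bar>f x\<bar> * indicator {x. K < \<bar>f x\<bar>} x) \<partial>M"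
  have "eventually (\<lambda>K. (SUP f\<in>F. ?tail K f) < ennreal t) at_top"
    using UI \<open>0 < t\<close> unfolding unif_integrable_def by (intro order_tendstoD(2)) auto
  then obtain K0 where K0: "\<And>K. K0 \<le> K \<Longrightarrow> (SUP f\<in>F. ?tail K f) < ennreal t"
    unfolding eventually_at_top_linorder by blast
  define K where "K = max K0 0"
  have "K0 \<le> K" "0 \<le> K" unfolding K_def by simp_all
  note K = this(2) K0[OF this(1)]
  have "(\<integral>\<^sup>+\<omega>. ennreal (\<bar>f \<omega>\<bar> * indicator A \<omega>) \<partial>M) \<le> ennreal t + ennreal K * emeasure M A"
    if "f \<in> F" "A \<in> sets M" for f A
  proof -
    have "f \<in> borel_measurable M" using UI that(1) by (simp add: unif_integrable_def)
    then have "(\<integral>\<^sup>+\<omega>. ennreal (\<bar>f \<omega>\<bar> * indicator A \<omega>) \<partial>M) \<le> ?tail K f + ennreal K * emeasure M A"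
      using nn_integral_abs_indicator_le that(2) K(1) by blast
    also have "?tail K f \<le> ennreal t"
      using K(2) SUP_upper[OF that(1), of "?tail K"] by simp
    finally show ?thesis by (simp add: add_right_mono)
  qed
  with K(1) that show ?thesis by blast
qed

lemma (in finite_measure) eventually_measure_gt_less:
  fixes f :: "'a \<Rightarrow> real"
  assumes [measurable]: "f \<in> borel_measurable M" and "0 < d"
  shows "eventually (\<lambda>R. measure M {\<omega> \<in> space M. R < f \<omega>} < d) at_top"
proof -
  define A where "A n = {\<omega> \<in> space M. real n < f \<omega>}" for n :: nat
  have "range A \<subseteq> sets M" "decseq A" by (auto simp: A_def decseq_def)
  then have "(\<lambda>n. measure M (A n)) \<longlonglongrightarrow> measure M (\<Inter>n. A n)"
    by (rule finite_Lim_measure_decseq)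
  moreover have "(\<Inter>n. A n) = {}"
  proof safe
    fix x assume "x \<in> (\<Inter>n. A n)"
    moreover obtain n :: nat where "f x < real n" using reals_Archimedean2 by blast
    ultimately show "x \<in> {}" by (auto simp: A_def dest!: spec[of _ n])
  qed
  ultimately have "eventually (\<lambda>n. measure M (A n) < d) sequentially"
    using \<open>0 < d\<close> by (intro order_tendstoD(2)) auto
  then obtain N where N: "measure M (A N) < d" by (auto simp: eventually_sequentially)
  have "measure M {\<omega> \<in> space M. R < f \<omega>} < d" if "real N \<le> R" for R
  proof -
    have "measure M {\<omega> \<in> space M. R < f \<omega>} \<le> measure M (A N)"
      using that by (intro finite_measure_mono) (auto simp: A_def)
    with N show ?thesis by simp
  qed
  then show ?thesis unfolding eventually_at_top_linorder by blast
qed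

lemma (in prob_space) integral_abs_diff_le_split:
  fixes f g :: "'a \<Rightarrow> real"
  assumes f: "integrable M f" and g: "integrable M g" and [measurable]: "G \<in> sets M" and "0 \<le> \<eta>"
    and close: "AE \<omega> in M. \<omega> \<in> G \<longrightarrow> \<bar>f \<omega> - g \<omega>\<bar> \<le> \<eta>"
    and f_off: "(\<integral>\<^sup>+\<omega>. ennreal (\<bar>f \<omega>\<bar> * indicator (space M - G) \<omega>) \<partial>M) \<le> ennreal \<eta>"
    and g_off: "(\<integral>\<^sup>+\<omega>. ennreal (\<bar>g \<omega>\<bar> * indicator (space M - G) \<omega>) \<partial>M) \<le> ennreal \<eta>"
  shows "(\<integral>\<omega>. \<bar>f \<omega> - g \<omega>\<bar> \<partial>M) \<le> 3 * \<eta>"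
proof -
  have [measurable]: "f \<in> borel_measurable M" "g \<in> borel_measurable M" using f g by auto
  have "AE \<omega> in M. ennreal \<bar>f \<omega> - g \<omega>\<bar> \<le> ennreal \<eta> * indicator G \<omega>
      + ennreal (\<bar>f \<omega>\<bar> * indicator (space M - G) \<omega>) + ennreal (\<bar>g \<omega>\<bar> * indicator (space M - G) \<omega>)"
    using close AE_space
  proof eventually_elim
    case (elim \<omega>)
    show ?case
    proof (cases "\<omega> \<in> G")
      case False
      have "ennreal \<bar>f \<omega> - g \<omega>\<bar> \<le> ennreal \<bar>f \<omega>\<bar> + ennreal \<bar>g \<omega>\<bar>"
        by (simp add: ennreal_plus[symmetric] ennreal_leI del: ennreal_plus)
      then show ?thesis using False elim by simp
    qed (use elim in \<open>auto intro: ennreal_leI\<close>)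
  qed
  then have "(\<integral>\<^sup>+\<omega>. ennreal \<bar>f \<omega> - g \<omega>\<bar> \<partial>M) \<le> (\<integral>\<^sup>+\<omega>. ennreal \<eta> * indicator G \<omega>
      + ennreal (\<bar>f \<omega>\<bar> * indicator (space M - G) \<omega>) + ennreal (\<bar>g \<omega>\<bar> * indicator (space M - G) \<omega>) \<partial>M)"
    by (rule nn_integral_mono_AE)
  also have "\<dots> = ennreal \<eta> * emeasure M G
      + (\<integral>\<^sup>+\<omega>. ennreal (\<bar>f \<omega>\<bar> * indicator (space M - G) \<omega>) \<partial>M)
      + (\<integral>\<^sup>+\<omega>. ennreal (\<bar>g \<omega>\<bar> * indicator (space M - G) \<omega>) \<partial>M)"
    by (simp add: nn_integral_add nn_integral_cmult_indicator)
  also have "\<dots> \<le> ennreal \<eta> + ennreal \<eta> + ennreal \<eta>"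
    using f_off g_off mult_left_mono[OF emeasure_le_1, of "ennreal \<eta>" G] by (intro add_mono) auto
  also have "\<dots> = ennreal (3 * \<eta>)" using \<open>0 \<le> \<eta>\<close> by (simp flip: ennreal_plus)
  finally show ?thesis
    using f g \<open>0 \<le> \<eta>\<close> by (simp add: nn_integral_eq_integral ennreal_le_iff)
qed

locale reasonably_elastic_utility =
  fixes U :: "real \<Rightarrow> real"
  assumes reasonably_elastic: "reasonably_elastic U"
begin

abbreviation V :: "real \<Rightarrow> real" where "V \<equiv> conjugate U"

lemma U_mono: "0 < x \<Longrightarrow> x \<le> x' \<Longrightarrow> U x \<le> U x'"
  using reasonably_elastic unfolding reasonably_elastic_def strict_mono_on_def
  by (metis greaterThan_iff less_eq_real_def order_less_le_trans)

lemma U_has_real_derivative: "0 < x \<Longrightarrow> (U has_real_derivative deriv U x) (at x)"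
  using reasonably_elastic unfolding reasonably_elastic_def
  by (simp add: DERIV_deriv_iff_real_differentiable)

lemma bdd_above_conjugate_set:
  assumes "0 < y"
  shows "bdd_above ((\<lambda>x. U x - x * y) ` {0<..})"
proof -
  have "((deriv U) \<longlongrightarrow> 0) at_top"
    using reasonably_elastic unfolding reasonably_elastic_def by simp
  then have "eventually (\<lambda>x. deriv U x < y) at_top"
    using assms by (rule order_tendstoD(2))
  then obtain x1 where x1: "\<And>x. x \<ge> x1 \<Longrightarrow> deriv U x < y"
    by (auto simp: eventually_at_top_linorder)
  define x0 where "x0 = max x1 1"
  have x0: "0 < x0" "\<And>x. x \<ge> x0 \<Longrightarrow> deriv U x < y"
    using x1 by (auto simp: x0_def)
  have "U x - x * y \<le> U x0" if "0 < x" for x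
  proof (cases "x \<le> x0")
    case True
    have "0 < x * y" using that assms by simp
    then show ?thesis using U_mono[OF that True] by linarith
  next
    case False
    then obtain z where z: "x0 < z" "z < x" "U x - U x0 = (x - x0) * deriv U z"
      using MVT2[of x0 x U "deriv U"] U_has_real_derivative x0(1) by force
    have "(x - x0) * deriv U z \<le> (x - x0) * y"
      using x0(2)[of z] z False by (intro mult_left_mono) auto
    moreover have "0 < x0 * y" using x0(1) assms by simp
    ultimately show ?thesis using z by (simp add: algebra_simps)
  qed
  then show ?thesis by (auto simp: bdd_above_def)
qed

lemma conjugate_ge: "0 < y \<Longrightarrow> 0 < x \<Longrightarrow> U x - x * y \<le> V y"
  unfolding conjugate_def by (rule cSUP_upper[OF _ bdd_above_conjugate_set]) auto

lemma conjugate_le: "0 < y \<Longrightarrow> (\<And>x. 0 < x \<Longrightarrow> U x - x * y \<le> B) \<Longrightarrow> V y \<le> B"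
  unfolding conjugate_def by (rule cSUP_least) auto

lemma conjugate_antimono:
  assumes "0 < y1" "y1 \<le> y2"
  shows "V y2 \<le> V y1"
proof (rule conjugate_le)
  fix x :: real assume "0 < x"
  then have "x * y1 \<le> x * y2" using assms by (intro mult_left_mono) auto
  with conjugate_ge[OF assms(1) \<open>0 < x\<close>] show "U x - x * y2 \<le> V y1" by linarith
qed (use assms in simp)

lemma convex_on_conjugate: "convex_on {0<..} V"
proof (rule convex_onI)
  fix t x y :: real assume t: "0 < t" "t < 1" and xy: "x \<in> {0<..}" "y \<in> {0<..}"
  show "V ((1 - t) *\<^sub>R x + t *\<^sub>R y) \<le> (1 - t) * V x + t * V y"
  proof (rule conjugate_le)
    fix z :: real assume z: "0 < z"
    have "U z - z * ((1 - t) *\<^sub>R x + t *\<^sub>R y) = (1 - t) * (U z - z * x) + t * (U z - z * y)"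
      by (simp add: algebra_simps)
    also have "\<dots> \<le> (1 - t) * V x + t * V y"
      using conjugate_ge[of x z] conjugate_ge[of y z] xy z t
      by (intro add_mono mult_left_mono) auto
    finally show "U z - z * ((1 - t) *\<^sub>R x + t *\<^sub>R y) \<le> (1 - t) * V x + t * V y" .
  qed (use t xy in \<open>simp add: add_pos_pos\<close>)
qed (auto simp: convex_real_interval)

lemma continuous_on_conjugate: "continuous_on {0<..} V"
  by (rule convex_on_continuous[OF _ convex_on_conjugate]) auto

lemma conjugate_neg_eq:
  assumes "y < 0"
  shows "V y = V (-1)"
proof -
  have unbounded: "\<not> bdd_above ((\<lambda>x. U x - x * y) ` {0<..})" if "y < 0" for y :: real
  proof
    assume "bdd_above ((\<lambda>x. U x - x * y) ` {0<..})"
    then obtain B where B: "\<And>x. x > 0 \<Longrightarrow> U x - x * y \<le> B" by (auto simp: bdd_above_def)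
    define x where "x = max 1 ((B - U 1 + 1) / (-y))"
    have "(B - U 1 + 1) / (-y) * (-y) \<le> x * (-y)"
      using that by (intro mult_right_mono) (auto simp: x_def)
    then have "B - U 1 + 1 \<le> x * (-y)" using that by simp
    moreover have "U 1 \<le> U x" using U_mono by (simp add: x_def)
    moreover have "U x - x * y \<le> B" using B by (simp add: x_def)
    ultimately show False by (simp add: algebra_simps)
  qed
  text \<open>Both suprema are taken over sets unbounded above, so both are the same junk value.\<close>
  have "(\<lambda>z. \<forall>w\<in>(\<lambda>x. U x - x * y) ` {0<..}. w \<le> z) = (\<lambda>z. False)" if "y < 0" for y :: real
    using unbounded[OF that] unfolding bdd_above_def fun_eq_iff by blast
  from this[OF assms] this[of "-1"] show ?thesis
    by (simp only: conjugate_def Sup_real_def neg_less_0_iff_less zero_less_one)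
qed

lemma borel_measurable_conjugate: "V \<in> borel_measurable borel"
proof -
  have "V = (\<lambda>y. if y \<in> {..0} then (if y \<in> {..<0} then V (-1) else V 0)
               else (if y \<in> {0<..} then V y else 0))"
  proof
    fix y :: real
    show "V y = (if y \<in> {..0} then (if y \<in> {..<0} then V (-1) else V 0)
               else (if y \<in> {0<..} then V y else 0))"
      using conjugate_neg_eq[of y] by (cases "y = 0") auto
  qed
  also have "\<dots> \<in> borel_measurable borel"
    by (intro measurable_If_set borel_measurable_continuous_on_if continuous_on_conjugate) auto
  finally show ?thesis .
qed

lemma abs_conjugate_le:
  assumes "0 < m" "m \<le> w" "V m \<le> B" "0 \<le> B" "0 < \<epsilon>"
  shows "\<bar>V w\<bar> \<le> B + \<bar>U \<epsilon>\<bar> + \<epsilon> * w"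
proof -
  have "V w \<le> V m" "U \<epsilon> - \<epsilon> * w \<le> V w"
    using conjugate_antimono[of m w] conjugate_ge[of w \<epsilon>] assms by (auto simp: mult.commute)
  moreover have "0 \<le> \<epsilon> * w" using assms by simp
  ultimately show ?thesis using assms(3,4) abs_ge_self[of "U \<epsilon>"] abs_ge_minus_self[of "U \<epsilon>"]
    by (simp add: abs_le_iff)
qed

lemma bounded_U_if_not_filterlim:
  assumes "\<not> filterlim U at_top at_top"
  obtains B where "\<And>x. 0 < x \<Longrightarrow> U x \<le> B"
proof -
  have "\<exists>B. \<forall>x>0. U x \<le> B"
  proof (rule ccontr)
    assume "\<nexists>B. \<forall>x>0. U x \<le> B"
    then have "eventually (\<lambda>x. B \<le> U x) at_top" for B
      unfolding eventually_at_top_linorder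
      by (meson U_mono less_imp_le less_le_trans not_le)
    then have "filterlim U at_top at_top" by (simp add: filterlim_at_top)
    with assms show False ..
  qed
  with that show ?thesis by blast
qed

lemma elasticity_eventually_below:
  assumes "filterlim U at_top at_top"
  obtains g x0 where "0 < g" "g < 1" "0 < x0" "\<And>x. x0 \<le> x \<Longrightarrow> x * deriv U x / U x < g \<and> 0 < U x"
proof -
  have "Limsup at_top (\<lambda>x. ereal (x * deriv U x / U x)) < 1"
    using reasonably_elastic assms
    unfolding reasonably_elastic_def asymptotic_elasticity_def by simp
  then obtain r :: real
    where r: "Limsup at_top (\<lambda>x. ereal (x * deriv U x / U x)) < ereal r" "ereal r < 1"
    using ereal_dense2 by blast
  define g where "g = max r (1/2)"
  have g: "0 < g" "g < 1" using r(2) by (auto simp: g_def)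
  have "eventually (\<lambda>x. x * deriv U x / U x < g) at_top"
    using Limsup_lessD[OF r(1)] by eventually_elim (auto simp: g_def)
  moreover have "eventually (\<lambda>x. 1 \<le> U x) at_top"
    using assms by (simp add: filterlim_at_top)
  ultimately have "eventually (\<lambda>x. x * deriv U x / U x < g \<and> 1 \<le> U x) at_top"
    by eventually_elim simp
  then obtain x1 where x1: "\<And>x. x \<ge> x1 \<Longrightarrow> x * deriv U x / U x < g \<and> 1 \<le> U x"
    by (auto simp: eventually_at_top_linorder)
  define x0 where "x0 = max x1 1"
  have "0 < x0" "\<And>x. x \<ge> x0 \<Longrightarrow> x * deriv U x / U x < g \<and> 0 < U x"
    using x1 by (force simp: x0_def)+
  with g that show ?thesis by blast
qed

text \<open>Integrating \<open>(ln U)' \<le> g (ln x)'\<close> beyond \<open>x0\<close>.\<close>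
lemma U_powr_growth:
  assumes "filterlim U at_top at_top"
  obtains g x0 where "0 < g" "g < 1" "0 < x0" "\<And>x. x0 \<le> x \<Longrightarrow> 0 < U x"
    "\<And>x x'. x0 \<le> x \<Longrightarrow> x \<le> x' \<Longrightarrow> U x' \<le> (x' / x) powr g * U x"
proof -
  obtain g x0 where g: "0 < g" "g < 1"
    and x0: "0 < x0" "\<And>x. x0 \<le> x \<Longrightarrow> x * deriv U x / U x < g \<and> 0 < U x"
    using elasticity_eventually_below[OF assms] by blast
  have "U x' \<le> (x' / x) powr g * U x" if xx: "x0 \<le> x" "x \<le> x'" for x x'
  proof (cases "x = x'")
    case False
    then have "x < x'" using xx by simp
    have pos: "0 < t" "0 < U t" if "x \<le> t" for t
      using x0 xx that by (auto dest!: x0(2)[of t])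
    have der: "((\<lambda>t. ln (U t) - g * ln t) has_real_derivative deriv U t / U t - g * (1 / t)) (at t)"
      if "x \<le> t" "t \<le> x'" for t
      using pos[OF that(1)] U_has_real_derivative[of t]
      by (auto intro!: derivative_eq_intros simp: field_simps)
    then obtain z where z: "x < z" "z < x'"
      "(ln (U x') - g * ln x') - (ln (U x) - g * ln x) = (x' - x) * (deriv U z / U z - g * (1 / z))"
      using MVT2[OF \<open>x < x'\<close> der] by blast
    have "deriv U z / U z < g * (1 / z)"
      using x0(2)[of z] pos[of z] xx z by (simp add: field_simps)
    then have "(x' - x) * (deriv U z / U z - g * (1 / z)) \<le> 0"
      using \<open>x < x'\<close> by (intro mult_nonneg_nonpos) auto
    then have "ln (U x') \<le> ln (U x) + g * ln (x' / x)"
      using z(3) pos[of x] pos[of x'] xx by (simp add: algebra_simps ln_div)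
    then have "exp (ln (U x')) \<le> exp (ln (U x) + g * ln (x' / x))" by simp
    then show ?thesis
      using pos[of x] pos[of x'] xx by (simp add: exp_add powr_def mult.commute)
  qed (use x0 xx in simp)
  with g x0 that show ?thesis by blast
qed

lemma conjugate_scaled_le_elastic:
  assumes "filterlim U at_top at_top" "0 < \<mu>"
  obtains K1 K2 where "0 \<le> K1" "0 \<le> K2" "\<And>z. 0 < z \<Longrightarrow> V (\<mu> * z) \<le> K1 * \<bar>V z\<bar> + K2"
proof -
  obtain g x0 where g: "0 < g" "g < 1" "0 < x0" "\<And>x. x0 \<le> x \<Longrightarrow> 0 < U x"
      "\<And>x x'. x0 \<le> x \<Longrightarrow> x \<le> x' \<Longrightarrow> U x' \<le> (x' / x) powr g * U x"
    using U_powr_growth[OF assms(1)] by blast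
  text \<open>Stretching the argument by \<open>s\<close> multiplies \<open>U\<close> by at most \<open>s powr g \<le> \<mu> s\<close>.\<close>
  define s where "s = max 1 ((1 / \<mu>) powr (1 / (1 - g)))"
  have s1: "1 \<le> s" by (simp add: s_def)
  have "1 / \<mu> = ((1 / \<mu>) powr (1 / (1 - g))) powr (1 - g)"
    using g assms by (simp add: powr_powr)
  also have "\<dots> \<le> s powr (1 - g)"
    using g by (intro powr_mono2) (auto simp: s_def)
  finally have "s powr g * (1 / \<mu>) \<le> s powr g * s powr (1 - g)"
    by (intro mult_left_mono) auto
  also have "\<dots> = s" using s1 by (simp add: powr_add[symmetric])
  finally have sg: "s powr g \<le> \<mu> * s" using assms by (simp add: field_simps)
  have "V (\<mu> * z) \<le> (\<mu> * s) * \<bar>V z\<bar> + \<bar>U (s * x0)\<bar>" if z: "0 < z" for z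
  proof (rule conjugate_le)
    fix x :: real assume x: "0 < x"
    have nonneg: "0 \<le> (\<mu> * s) * \<bar>V z\<bar>" using assms s1 by simp
    show "U x - x * (\<mu> * z) \<le> (\<mu> * s) * \<bar>V z\<bar> + \<bar>U (s * x0)\<bar>"
    proof (cases "x \<le> s * x0")
      case True
      have "0 < x * (\<mu> * z)" using x assms z by simp
      then show ?thesis using U_mono[OF x True] nonneg by linarith
    next
      case False
      define x' where "x' = x / s"
      have x': "x0 \<le> x'" "x' \<le> x" "x = s * x'" "x / x' = s"
        using False s1 x by (auto simp: x'_def field_simps)
      have "U x \<le> s powr g * U x'" using g(5)[OF x'(1,2)] x'(4) by simp
      also have "\<dots> \<le> (\<mu> * s) * U x'" using sg g(4)[OF x'(1)] by (intro mult_right_mono) auto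
      finally have "U x - x * (\<mu> * z) \<le> (\<mu> * s) * (U x' - x' * z)"
        by (simp add: x'(3) algebra_simps)
      also have "\<dots> \<le> (\<mu> * s) * \<bar>V z\<bar>"
        using conjugate_ge[OF z, of x'] x'(1) g(3) assms s1
        by (intro mult_left_mono) auto
      finally show ?thesis by simp
    qed
  qed (use assms z in simp)
  with that[of "\<mu> * s" "\<bar>U (s * x0)\<bar>"] assms s1 show ?thesis by simp
qed

lemma conjugate_scaled_le:
  assumes "0 < \<mu>"
  obtains K1 K2 where "0 \<le> K1" "0 \<le> K2" "\<And>z. 0 < z \<Longrightarrow> V (\<mu> * z) \<le> K1 * \<bar>V z\<bar> + K2"
proof (cases "1 \<le> \<mu>")
  case True
  have "V (\<mu> * z) \<le> 1 * \<bar>V z\<bar> + 0" if "0 < z" for z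
    using conjugate_antimono[of z "\<mu> * z"] that True by simp
  with that[of 1 0] show ?thesis by simp
next
  case False
  show ?thesis
  proof (cases "filterlim U at_top at_top")
    case True
    with conjugate_scaled_le_elastic assms that show ?thesis by blast
  next
    case False
    then obtain B where B: "\<And>x. 0 < x \<Longrightarrow> U x \<le> B"
      using bounded_U_if_not_filterlim by blast
    have "V (\<mu> * z) \<le> \<bar>B\<bar>" if "0 < z" for z
    proof (rule conjugate_le)
      fix x :: real assume "0 < x"
      then have "0 < x * (\<mu> * z)" using assms that by simp
      then show "U x - x * (\<mu> * z) \<le> \<bar>B\<bar>" using B[OF \<open>0 < x\<close>] by linarith
    qed (use assms that in simp)
    with that[of 0 "\<bar>B\<bar>"] show ?thesis by simp
  qed
qed

lemma conjugate_product_uniformly_continuous: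
  assumes y0: "0 < y0" and R: "1 \<le> R" and c: "0 < c" and \<eta>: "0 < \<eta>"
  obtains r d where "0 < r" "0 < d"
    "\<And>y z z0 v. \<bar>y - y0\<bar> < r \<Longrightarrow> \<bar>z - z0\<bar> \<le> d \<Longrightarrow> c \<le> v \<Longrightarrow> v \<le> R \<Longrightarrow>
      0 < z0 \<Longrightarrow> z0 \<le> R \<Longrightarrow> 1 / z0 \<le> R \<Longrightarrow> \<bar>V (y * z * v) - V (y0 * z0 * v)\<bar> < \<eta>"
proof -
  define I where "I = {y0 * c / (4 * R) .. 2 * y0 * (R + 1) * R}"
  have "0 < y0 * c / (4 * R)" using y0 R c by simp
  then have "I \<subseteq> {0<..}" by (auto simp: I_def)
  then have "uniformly_continuous_on I V"
    by (intro compact_uniformly_continuous continuous_on_subset[OF continuous_on_conjugate])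
      (auto simp: I_def)
  then obtain \<rho> where \<rho>: "0 < \<rho>"
    and uc: "\<And>w w'. w \<in> I \<Longrightarrow> w' \<in> I \<Longrightarrow> \<bar>w' - w\<bar> < \<rho> \<Longrightarrow> \<bar>V w' - V w\<bar> < \<eta>"
    unfolding uniformly_continuous_on_def dist_real_def using \<eta> by metis
  define r where "r = min (y0 / 2) (\<rho> / (2 * ((R + 1) * R)))"
  define d where "d = min (1 / (2 * R)) (\<rho> / (2 * (y0 * R)))"
  have "\<bar>V (y * z * v) - V (y0 * z0 * v)\<bar> < \<eta>"
    if y: "\<bar>y - y0\<bar> < r" and z: "\<bar>z - z0\<bar> \<le> d" and v: "c \<le> v" "v \<le> R"
      and z0: "0 < z0" "z0 \<le> R" "1 / z0 \<le> R" for y z z0 v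
  proof -
    have y': "\<bar>y - y0\<bar> \<le> y0 / 2" and z': "\<bar>z - z0\<bar> \<le> 1 / (2 * R)"
      using y z by (auto simp: r_def d_def)
    note bounds = product_perturbation[OF R c v z0 z' y0 y']
    have q: "0 < 2 * ((R + 1) * R)" using R by simp
    have "\<bar>y - y0\<bar> < \<rho> / (2 * ((R + 1) * R))" using y by (simp add: r_def)
    then have "\<bar>y - y0\<bar> * (2 * ((R + 1) * R)) < \<rho>" unfolding pos_less_divide_eq[OF q] .
    then have "\<bar>y - y0\<bar> * ((R + 1) * R) < \<rho> / 2" by (simp add: algebra_simps)
    moreover have "y0 * R * \<bar>z - z0\<bar> \<le> \<rho> / 2"
      using z y0 R by (simp add: d_def field_simps)
    ultimately have "\<bar>y * z * v - y0 * z0 * v\<bar> < \<rho>" using bounds(3) by linarith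
    moreover have "y * z * v \<in> I" "y0 * z0 * v \<in> I"
      using bounds(1,2) product_perturbation(1,2)[OF R c v z0 _ y0, of z0 y0] R y0
      by (auto simp: I_def)
    ultimately show ?thesis using uc by simp
  qed
  moreover have "0 < r" "0 < d" using y0 R \<rho> by (auto simp: r_def d_def)
  ultimately show ?thesis using that by blast
qed

end

locale conjugate_family = reasonably_elastic_utility U + prob_space M
  for U :: "real \<Rightarrow> real" and M :: "'a measure" +
  fixes \<tau> :: "'l topology" and Z :: "'l \<Rightarrow> 'a \<Rightarrow> real" and \<Lambda>' :: "'l set"
    and Y :: "'a \<Rightarrow> real" and c S :: real
  assumes Z_measurable: "\<And>l. l \<in> \<Lambda>' \<Longrightarrow> Z l \<in> borel_measurable M"
    and Z_pos: "\<And>l \<omega>. l \<in> \<Lambda>' \<Longrightarrow> \<omega> \<in> space M \<Longrightarrow> 0 < Z l \<omega>"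
    and subset_topspace: "\<Lambda>' \<subseteq> topspace \<tau>"
    and unif_integrable_conjugate: "unif_integrable M ((\<lambda>l \<omega>. V (Z l \<omega>)) ` \<Lambda>')"
    and appropriate: "appropriate_topology M \<tau> Z"
    and Y_measurable [measurable]: "Y \<in> borel_measurable M"
    and c_pos: "0 < c" and Y_ge: "AE \<omega> in M. c \<le> Y \<omega>"
    and S_nonneg: "0 \<le> S"
    and ZY_le: "\<And>l. l \<in> \<Lambda>' \<Longrightarrow> (\<integral>\<^sup>+\<omega>. ennreal (Z l \<omega> * Y \<omega>) \<partial>M) \<le> ennreal S"
begin

lemma borel_measurable_conjugate_comp [measurable]:
  "f \<in> borel_measurable M \<Longrightarrow> (\<lambda>\<omega>. V (f \<omega>)) \<in> borel_measurable M"
  using measurable_compose[OF _ borel_measurable_conjugate] by blast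

lemma nn_integral_conjugate_indicator_le:
  assumes a: "0 < a" "a \<le> y" and \<epsilon>: "0 < \<epsilon>" and l: "l \<in> \<Lambda>'" and [measurable]: "A \<in> sets M"
    and K: "0 \<le> K1" "0 \<le> K2" "\<And>z. 0 < z \<Longrightarrow> V (a * c * z) \<le> K1 * \<bar>V z\<bar> + K2"
  shows "(\<integral>\<^sup>+\<omega>. ennreal (\<bar>V (y * Z l \<omega> * Y \<omega>)\<bar> * indicator A \<omega>) \<partial>M)
    \<le> ennreal K1 * (\<integral>\<^sup>+\<omega>. ennreal (\<bar>V (Z l \<omega>)\<bar> * indicator A \<omega>) \<partial>M)
       + ennreal (K2 + \<bar>U \<epsilon>\<bar>) * emeasure M A + ennreal (\<epsilon> * y * S)"
proof -
  have [measurable]: "Z l \<in> borel_measurable M" using l by (rule Z_measurable)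
  have "AE \<omega> in M. ennreal (\<bar>V (y * Z l \<omega> * Y \<omega>)\<bar> * indicator A \<omega>)
     \<le> ennreal K1 * ennreal (\<bar>V (Z l \<omega>)\<bar> * indicator A \<omega>)
        + ennreal (K2 + \<bar>U \<epsilon>\<bar>) * indicator A \<omega> + ennreal (\<epsilon> * y) * ennreal (Z l \<omega> * Y \<omega>)"
    using Y_ge AE_space
  proof eventually_elim
    case (elim \<omega>)
    have pos: "0 < Z l \<omega>" "0 < Y \<omega>" using Z_pos[OF l elim(2)] c_pos elim(1) by auto
    have "a * c \<le> y * Y \<omega>" using a c_pos elim(1) by (intro mult_mono) auto
    then have le: "a * c * Z l \<omega> \<le> y * Z l \<omega> * Y \<omega>"
      using pos by (simp add: mult.commute mult.left_commute mult_right_mono)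
    have "\<bar>V (y * Z l \<omega> * Y \<omega>)\<bar> \<le> K1 * \<bar>V (Z l \<omega>)\<bar> + K2 + \<bar>U \<epsilon>\<bar> + \<epsilon> * (y * Z l \<omega> * Y \<omega>)"
      by (rule abs_conjugate_le[OF _ le K(3)[OF pos(1)]]) (use a pos c_pos K(1,2) \<epsilon> in simp_all)
    then have "ennreal \<bar>V (y * Z l \<omega> * Y \<omega>)\<bar>
        \<le> ennreal (K1 * \<bar>V (Z l \<omega>)\<bar> + (K2 + \<bar>U \<epsilon>\<bar>) + (\<epsilon> * y) * (Z l \<omega> * Y \<omega>))"
      by (intro ennreal_leI) (simp add: algebra_simps)
    also have "\<dots> = ennreal K1 * ennreal \<bar>V (Z l \<omega>)\<bar> + ennreal (K2 + \<bar>U \<epsilon>\<bar>)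
        + ennreal (\<epsilon> * y) * ennreal (Z l \<omega> * Y \<omega>)"
      using K(1,2) \<epsilon> a pos by (simp add: ennreal_plus ennreal_mult)
    finally show ?case by (cases "\<omega> \<in> A") auto
  qed
  then have "(\<integral>\<^sup>+\<omega>. ennreal (\<bar>V (y * Z l \<omega> * Y \<omega>)\<bar> * indicator A \<omega>) \<partial>M)
    \<le> ennreal K1 * (\<integral>\<^sup>+\<omega>. ennreal (\<bar>V (Z l \<omega>)\<bar> * indicator A \<omega>) \<partial>M)
       + ennreal (K2 + \<bar>U \<epsilon>\<bar>) * emeasure M A
       + ennreal (\<epsilon> * y) * (\<integral>\<^sup>+\<omega>. ennreal (Z l \<omega> * Y \<omega>) \<partial>M)"
    by (auto dest!: nn_integral_mono_AE simp: nn_integral_add nn_integral_cmult nn_integral_cmult_indicator)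
  also have "ennreal (\<epsilon> * y) * (\<integral>\<^sup>+\<omega>. ennreal (Z l \<omega> * Y \<omega>) \<partial>M) \<le> ennreal (\<epsilon> * y * S)"
    using mult_left_mono[OF ZY_le[OF l], of "ennreal (\<epsilon> * y)"] \<epsilon> a S_nonneg
    by (simp add: ennreal_mult)
  finally show ?thesis by (simp add: add_left_mono)
qed

lemma nn_integral_conjugate_indicator_bound:
  assumes a: "0 < a" and \<eta>: "0 < \<eta>"
  shows "\<exists>C\<ge>0. \<forall>y\<ge>a. \<forall>l\<in>\<Lambda>'. \<forall>A\<in>sets M.
    (\<integral>\<^sup>+\<omega>. ennreal (\<bar>V (y * Z l \<omega> * Y \<omega>)\<bar> * indicator A \<omega>) \<partial>M) \<le> ennreal (\<eta> * (1 + y) + C * measure M A)"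
proof -
  obtain K1 K2 where K: "0 \<le> K1" "0 \<le> K2" "\<And>z. 0 < z \<Longrightarrow> V (a * c * z) \<le> K1 * \<bar>V z\<bar> + K2"
    using conjugate_scaled_le[of "a * c"] a c_pos by auto
  define t where "t = \<eta> / (K1 + 1)"
  define \<epsilon> where "\<epsilon> = \<eta> / (S + 1)"
  have t: "0 < t" "K1 * t \<le> \<eta>" using K(1) \<eta> by (auto simp: t_def field_simps)
  have \<epsilon>: "0 < \<epsilon>" "\<epsilon> * S \<le> \<eta>" using S_nonneg \<eta> by (auto simp: \<epsilon>_def field_simps)
  obtain K where K0: "0 \<le> K" and UI: "\<And>f A. f \<in> (\<lambda>l \<omega>. V (Z l \<omega>)) ` \<Lambda>' \<Longrightarrow> A \<in> sets M \<Longrightarrow>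
      (\<integral>\<^sup>+\<omega>. ennreal (\<bar>f \<omega>\<bar> * indicator A \<omega>) \<partial>M) \<le> ennreal t + ennreal K * emeasure M A"
    using unif_integrable_indicator_le[OF unif_integrable_conjugate t(1)] by blast
  define C where "C = K1 * K + K2 + \<bar>U \<epsilon>\<bar>"
  have "(\<integral>\<^sup>+\<omega>. ennreal (\<bar>V (y * Z l \<omega> * Y \<omega>)\<bar> * indicator A \<omega>) \<partial>M) \<le> ennreal (\<eta> * (1 + y) + C * measure M A)"
    if y: "a \<le> y" and l: "l \<in> \<Lambda>'" and A: "A \<in> sets M" for y l A
  proof -
    have "0 < y" using a y by simp
    have "(\<integral>\<^sup>+\<omega>. ennreal (\<bar>V (y * Z l \<omega> * Y \<omega>)\<bar> * indicator A \<omega>) \<partial>M)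
      \<le> ennreal K1 * (\<integral>\<^sup>+\<omega>. ennreal (\<bar>V (Z l \<omega>)\<bar> * indicator A \<omega>) \<partial>M)
         + ennreal (K2 + \<bar>U \<epsilon>\<bar>) * emeasure M A + ennreal (\<epsilon> * y * S)"
      using a y \<epsilon>(1) l A K by (rule nn_integral_conjugate_indicator_le)
    also have "\<dots> \<le> ennreal K1 * (ennreal t + ennreal K * emeasure M A)
         + ennreal (K2 + \<bar>U \<epsilon>\<bar>) * emeasure M A + ennreal (\<epsilon> * y * S)"
      using UI[OF imageI[OF l] A] by (intro add_right_mono mult_left_mono) simp_all
    also have "\<dots> = ennreal (K1 * (t + K * measure M A) + (K2 + \<bar>U \<epsilon>\<bar>) * measure M A + \<epsilon> * y * S)"
      using K K0 t(1) \<epsilon>(1) S_nonneg \<open>0 < y\<close> A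
      by (simp add: emeasure_eq_measure ennreal_plus ennreal_mult add_nonneg_nonneg mult_nonneg_nonneg)
    also have "\<dots> \<le> ennreal (\<eta> * (1 + y) + C * measure M A)"
    proof (intro ennreal_leI)
      have "\<epsilon> * S * y \<le> \<eta> * y" using mult_right_mono[OF \<epsilon>(2), of y] \<open>0 < y\<close> by simp
      then show "K1 * (t + K * measure M A) + (K2 + \<bar>U \<epsilon>\<bar>) * measure M A + \<epsilon> * y * S
          \<le> \<eta> * (1 + y) + C * measure M A"
        using t(2) by (simp add: C_def algebra_simps)
    qed
    finally show ?thesis .
  qed
  moreover have "0 \<le> C" using K K0 by (simp add: C_def)
  ultimately show ?thesis by blast
qed

lemma integrable_conjugate:
  assumes "0 < y" "l \<in> \<Lambda>'"
  shows "integrable M (\<lambda>\<omega>. V (y * Z l \<omega> * Y \<omega>))"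
proof (rule integrableI_bounded)
  have [measurable]: "Z l \<in> borel_measurable M" using assms(2) by (rule Z_measurable)
  show "(\<lambda>\<omega>. V (y * Z l \<omega> * Y \<omega>)) \<in> borel_measurable M" by measurable
  obtain C where "\<forall>y'\<ge>y. \<forall>l\<in>\<Lambda>'. \<forall>A\<in>sets M.
      (\<integral>\<^sup>+\<omega>. ennreal (\<bar>V (y' * Z l \<omega> * Y \<omega>)\<bar> * indicator A \<omega>) \<partial>M) \<le> ennreal (1 * (1 + y') + C * measure M A)"
    using nn_integral_conjugate_indicator_bound[OF assms(1) zero_less_one] by blast
  from this[rule_format, OF order_refl assms(2) sets.top]
  have "(\<integral>\<^sup>+\<omega>. ennreal (\<bar>V (y * Z l \<omega> * Y \<omega>)\<bar> * indicator (space M) \<omega>) \<partial>M) < \<infinity>"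
    by (rule le_less_trans) simp
  moreover have "(\<integral>\<^sup>+\<omega>. ennreal (norm (V (y * Z l \<omega> * Y \<omega>))) \<partial>M)
      = (\<integral>\<^sup>+\<omega>. ennreal (\<bar>V (y * Z l \<omega> * Y \<omega>)\<bar> * indicator (space M) \<omega>) \<partial>M)"
    by (intro nn_integral_cong) simp
  ultimately show "(\<integral>\<^sup>+\<omega>. ennreal (norm (V (y * Z l \<omega> * Y \<omega>))) \<partial>M) < \<infinity>" by simp
qed

lemma conjugate_uniformly_absolutely_continuous:
  assumes e: "0 < e" and a: "0 < a" "a \<le> b"
  obtains \<delta> where "0 < \<delta>" "\<And>y l A. a \<le> y \<Longrightarrow> y \<le> b \<Longrightarrow> l \<in> \<Lambda>' \<Longrightarrow> A \<in> sets M \<Longrightarrow> measure M A < \<delta> \<Longrightarrow>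
    (\<integral>\<^sup>+\<omega>. ennreal (\<bar>V (y * Z l \<omega> * Y \<omega>)\<bar> * indicator A \<omega>) \<partial>M) < ennreal e"
proof -
  define \<eta> where "\<eta> = e / (2 * (1 + b))"
  have \<eta>: "0 < \<eta>" using e a by (simp add: \<eta>_def)
  obtain C where C: "0 \<le> C" "\<forall>y\<ge>a. \<forall>l\<in>\<Lambda>'. \<forall>A\<in>sets M.
    (\<integral>\<^sup>+\<omega>. ennreal (\<bar>V (y * Z l \<omega> * Y \<omega>)\<bar> * indicator A \<omega>) \<partial>M) \<le> ennreal (\<eta> * (1 + y) + C * measure M A)"
    using nn_integral_conjugate_indicator_bound[OF a(1) \<eta>] by blast
  define \<delta> where "\<delta> = e / (2 * (C + 1))"
  have "(\<integral>\<^sup>+\<omega>. ennreal (\<bar>V (y * Z l \<omega> * Y \<omega>)\<bar> * indicator A \<omega>) \<partial>M) < ennreal e"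
    if y: "a \<le> y" "y \<le> b" and l: "l \<in> \<Lambda>'" and A: "A \<in> sets M" and "measure M A < \<delta>" for y l A
  proof -
    have "\<eta> * (1 + y) \<le> \<eta> * (1 + b)" using \<eta> y(2) by simp
    also have "\<dots> = e / 2" using a by (simp add: \<eta>_def field_simps add_pos_pos)
    finally have "\<eta> * (1 + y) \<le> e / 2" .
    moreover have "C * measure M A \<le> C * \<delta>" using C(1) that(5) by (simp add: mult_left_mono)
    moreover have "C * \<delta> < e / 2" using C(1) e by (simp add: \<delta>_def field_simps)
    ultimately have "\<eta> * (1 + y) + C * measure M A < e" by linarith
    with C(2)[rule_format, OF y(1) l A] e show ?thesis by (meson ennreal_lessI order.strict_trans1)
  qed
  moreover have "0 < \<delta>" using e C(1) by (simp add: \<delta>_def)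
  ultimately show ?thesis using that by blast
qed

lemma bounded_off_small_set:
  assumes "l0 \<in> \<Lambda>'" "0 < \<delta>"
  obtains R where "1 \<le> R" "measure M {\<omega> \<in> space M. \<not> (Y \<omega> \<le> R \<and> Z l0 \<omega> \<le> R \<and> 1 / Z l0 \<omega> \<le> R)} < \<delta>"
proof -
  have [measurable]: "Z l0 \<in> borel_measurable M" using assms(1) by (rule Z_measurable)
  have "\<delta> / 3 > 0" using assms(2) by simp
  then have "eventually (\<lambda>R. 1 \<le> R \<and> measure M {\<omega> \<in> space M. R < Y \<omega>} < \<delta> / 3
      \<and> measure M {\<omega> \<in> space M. R < Z l0 \<omega>} < \<delta> / 3 \<and> measure M {\<omega> \<in> space M. R < 1 / Z l0 \<omega>} < \<delta> / 3) at_top"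
    by (intro eventually_conj eventually_ge_at_top eventually_measure_gt_less) measurable
  then obtain R where R: "1 \<le> R" "measure M {\<omega> \<in> space M. R < Y \<omega>} < \<delta> / 3"
      "measure M {\<omega> \<in> space M. R < Z l0 \<omega>} < \<delta> / 3" "measure M {\<omega> \<in> space M. R < 1 / Z l0 \<omega>} < \<delta> / 3"
    unfolding eventually_at_top_linorder by blast
  have "{\<omega> \<in> space M. \<not> (Y \<omega> \<le> R \<and> Z l0 \<omega> \<le> R \<and> 1 / Z l0 \<omega> \<le> R)}
      = ({\<omega> \<in> space M. R < Y \<omega>} \<union> {\<omega> \<in> space M. R < Z l0 \<omega>}) \<union> {\<omega> \<in> space M. R < 1 / Z l0 \<omega>}"
    by auto
  also have "measure M \<dots> \<le> measure M ({\<omega> \<in> space M. R < Y \<omega>} \<union> {\<omega> \<in> space M. R < Z l0 \<omega>})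
      + measure M {\<omega> \<in> space M. R < 1 / Z l0 \<omega>}"
    by (rule measure_Un_le) measurable
  also have "\<dots> \<le> measure M {\<omega> \<in> space M. R < Y \<omega>} + measure M {\<omega> \<in> space M. R < Z l0 \<omega>}
      + measure M {\<omega> \<in> space M. R < 1 / Z l0 \<omega>}"
    by (intro add_right_mono measure_Un_le) measurable
  finally show ?thesis using R that by simp
qed

lemma conjugate_L1_close:
  assumes y0: "0 < y0" and l0: "l0 \<in> \<Lambda>'" and e: "0 < e"
  obtains r d where "0 < r" "0 < d"
    "\<And>y l. \<bar>y - y0\<bar> < r \<Longrightarrow> l \<in> \<Lambda>' \<Longrightarrow> measure M {\<omega> \<in> space M. d < \<bar>Z l \<omega> - Z l0 \<omega>\<bar>} < d \<Longrightarrow>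
      (\<integral>\<omega>. \<bar>V (y * Z l \<omega> * Y \<omega>) - V (y0 * Z l0 \<omega> * Y \<omega>)\<bar> \<partial>M) < e"
proof -
  have [measurable]: "Z l0 \<in> borel_measurable M" using l0 by (rule Z_measurable)
  obtain \<delta> where \<delta>: "0 < \<delta>" and small: "\<And>y l A. y0 / 2 \<le> y \<Longrightarrow> y \<le> 2 * y0 \<Longrightarrow> l \<in> \<Lambda>' \<Longrightarrow>
      A \<in> sets M \<Longrightarrow> measure M A < \<delta> \<Longrightarrow>
      (\<integral>\<^sup>+\<omega>. ennreal (\<bar>V (y * Z l \<omega> * Y \<omega>)\<bar> * indicator A \<omega>) \<partial>M) < ennreal (e / 4)"
    by (rule conjugate_uniformly_absolutely_continuous[of "e / 4" "y0 / 2" "2 * y0"]) (use e y0 in auto)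
  obtain R where R: "1 \<le> R"
    and off_R: "measure M {\<omega> \<in> space M. \<not> (Y \<omega> \<le> R \<and> Z l0 \<omega> \<le> R \<and> 1 / Z l0 \<omega> \<le> R)} < \<delta> / 2"
    using bounded_off_small_set[OF l0, of "\<delta> / 2"] \<delta> by auto
  obtain r' d' where r'd': "0 < r'" "0 < d'"
    "\<And>y z z0 v. \<bar>y - y0\<bar> < r' \<Longrightarrow> \<bar>z - z0\<bar> \<le> d' \<Longrightarrow> c \<le> v \<Longrightarrow> v \<le> R \<Longrightarrow>
      0 < z0 \<Longrightarrow> z0 \<le> R \<Longrightarrow> 1 / z0 \<le> R \<Longrightarrow> \<bar>V (y * z * v) - V (y0 * z0 * v)\<bar> < e / 4"
    by (rule conjugate_product_uniformly_continuous[OF y0 R c_pos, of "e / 4"]) (use e in auto)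
  define r where "r = min r' (y0 / 2)"
  define d where "d = min d' (\<delta> / 2)"
  have "(\<integral>\<omega>. \<bar>V (y * Z l \<omega> * Y \<omega>) - V (y0 * Z l0 \<omega> * Y \<omega>)\<bar> \<partial>M) < e"
    if y: "\<bar>y - y0\<bar> < r" and l: "l \<in> \<Lambda>'"
      and off_d: "measure M {\<omega> \<in> space M. d < \<bar>Z l \<omega> - Z l0 \<omega>\<bar>} < d" for y l
  proof -
    have [measurable]: "Z l \<in> borel_measurable M" using l by (rule Z_measurable)
    define G where "G = {\<omega> \<in> space M. (Y \<omega> \<le> R \<and> Z l0 \<omega> \<le> R \<and> 1 / Z l0 \<omega> \<le> R) \<and> \<bar>Z l \<omega> - Z l0 \<omega>\<bar> \<le> d}"
    have [measurable]: "G \<in> sets M" unfolding G_def by measurable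
    have "space M - G = {\<omega> \<in> space M. \<not> (Y \<omega> \<le> R \<and> Z l0 \<omega> \<le> R \<and> 1 / Z l0 \<omega> \<le> R)}
        \<union> {\<omega> \<in> space M. d < \<bar>Z l \<omega> - Z l0 \<omega>\<bar>}"
      by (auto simp: G_def)
    then have "measure M (space M - G) \<le> measure M {\<omega> \<in> space M. \<not> (Y \<omega> \<le> R \<and> Z l0 \<omega> \<le> R \<and> 1 / Z l0 \<omega> \<le> R)}
        + measure M {\<omega> \<in> space M. d < \<bar>Z l \<omega> - Z l0 \<omega>\<bar>}"
      by (simp only:) (rule measure_Un_le; measurable)
    then have off_G: "measure M (space M - G) < \<delta>"
      using off_R off_d by (simp add: d_def)
    have close: "AE \<omega> in M. \<omega> \<in> G \<longrightarrow> \<bar>V (y * Z l \<omega> * Y \<omega>) - V (y0 * Z l0 \<omega> * Y \<omega>)\<bar> \<le> e / 4"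
      using Y_ge
    proof (rule AE_mp, intro AE_I2 impI)
      fix \<omega> assume "c \<le> Y \<omega>" "\<omega> \<in> G"
      then show "\<bar>V (y * Z l \<omega> * Y \<omega>) - V (y0 * Z l0 \<omega> * Y \<omega>)\<bar> \<le> e / 4"
        using r'd'(3)[of y "Z l \<omega>" "Z l0 \<omega>" "Y \<omega>"] Z_pos[OF l0] y
        by (force simp: G_def r_def d_def)
    qed
    have "\<bar>y - y0\<bar> < y0 / 2" using y by (simp add: r_def)
    then have y_range: "y0 / 2 \<le> y" "y \<le> 2 * y0" "0 < y" using y0 unfolding abs_less_iff by linarith+
    have "(\<integral>\<omega>. \<bar>V (y * Z l \<omega> * Y \<omega>) - V (y0 * Z l0 \<omega> * Y \<omega>)\<bar> \<partial>M) \<le> 3 * (e / 4)"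
    proof (rule integral_abs_diff_le_split[OF _ _ _ _ close])
      show "(\<integral>\<^sup>+\<omega>. ennreal (\<bar>V (y * Z l \<omega> * Y \<omega>)\<bar> * indicator (space M - G) \<omega>) \<partial>M) \<le> ennreal (e / 4)"
        using small[OF y_range(1,2) l _ off_G] by (simp add: less_imp_le)
      show "(\<integral>\<^sup>+\<omega>. ennreal (\<bar>V (y0 * Z l0 \<omega> * Y \<omega>)\<bar> * indicator (space M - G) \<omega>) \<partial>M) \<le> ennreal (e / 4)"
        using small[OF _ _ l0 _ off_G] y0 by (simp add: less_imp_le)
    qed (use integrable_conjugate y_range(3) l y0 l0 e in auto)
    then show ?thesis using e by linarith
  qed
  moreover have "0 < r" "0 < d" using r'd'(1,2) y0 \<delta> by (auto simp: r_def d_def)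
  ultimately show ?thesis using that by blast
qed

lemma conjugate_L1_continuous:
  assumes "0 < y0" "l0 \<in> \<Lambda>'" "0 < e"
  shows "\<exists>W. openin (prod_topology euclideanreal \<tau>) W \<and> (y0, l0) \<in> W \<and>
    (\<forall>(y, l)\<in>W. 0 < y \<and> l \<in> \<Lambda>' \<longrightarrow>
      (\<integral>\<omega>. \<bar>V (y * Z l \<omega> * Y \<omega>) - V (y0 * Z l0 \<omega> * Y \<omega>)\<bar> \<partial>M) < e)"
proof -
  obtain r d where rd: "0 < r" "0 < d"
    "\<And>y l. \<bar>y - y0\<bar> < r \<Longrightarrow> l \<in> \<Lambda>' \<Longrightarrow> measure M {\<omega> \<in> space M. d < \<bar>Z l \<omega> - Z l0 \<omega>\<bar>} < d \<Longrightarrow>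
      (\<integral>\<omega>. \<bar>V (y * Z l \<omega> * Y \<omega>) - V (y0 * Z l0 \<omega> * Y \<omega>)\<bar> \<partial>M) < e"
    by (rule conjugate_L1_close[OF assms]) auto
  have "l0 \<in> topspace \<tau>" using subset_topspace assms(2) by blast
  then have "\<exists>N. openin \<tau> N \<and> l0 \<in> N \<and> (\<forall>l\<in>N. measure M {\<omega> \<in> space M. d < \<bar>Z l \<omega> - Z l0 \<omega>\<bar>} < d)"
    using appropriate rd(2) unfolding appropriate_topology_def by simp
  then obtain N where N: "openin \<tau> N" "l0 \<in> N"
    "\<And>l. l \<in> N \<Longrightarrow> measure M {\<omega> \<in> space M. d < \<bar>Z l \<omega> - Z l0 \<omega>\<bar>} < d"
    by blast
  have "openin (prod_topology euclideanreal \<tau>) ({y0 - r <..< y0 + r} \<times> N)"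
    using N(1) by (simp add: openin_prod_Times_iff)
  moreover have "(y0, l0) \<in> {y0 - r <..< y0 + r} \<times> N" using rd(1) N(2) by simp
  moreover have "(\<integral>\<omega>. \<bar>V (y * Z l \<omega> * Y \<omega>) - V (y0 * Z l0 \<omega> * Y \<omega>)\<bar> \<partial>M) < e"
    if "(y, l) \<in> {y0 - r <..< y0 + r} \<times> N" "l \<in> \<Lambda>'" for y l
  proof -
    have "\<bar>y - y0\<bar> < r" "l \<in> N" using that(1) by (auto simp: abs_less_iff)
    then show ?thesis using rd(3) N(3) that(2) by blast
  qed
  ultimately show ?thesis by blast
qed

lemma conjugate_expectation_continuous:
  assumes "0 < y0" "l0 \<in> \<Lambda>'" "0 < e"
  shows "\<exists>W. openin (prod_topology euclideanreal \<tau>) W \<and> (y0, l0) \<in> W \<and>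
    (\<forall>(y, l)\<in>W. 0 < y \<and> l \<in> \<Lambda>' \<longrightarrow>
      \<bar>(\<integral>\<omega>. V (y * Z l \<omega> * Y \<omega>) \<partial>M) - (\<integral>\<omega>. V (y0 * Z l0 \<omega> * Y \<omega>) \<partial>M)\<bar> < e)"
proof -
  obtain W where W: "openin (prod_topology euclideanreal \<tau>) W" "(y0, l0) \<in> W"
    "\<forall>(y, l)\<in>W. 0 < y \<and> l \<in> \<Lambda>' \<longrightarrow>
      (\<integral>\<omega>. \<bar>V (y * Z l \<omega> * Y \<omega>) - V (y0 * Z l0 \<omega> * Y \<omega>)\<bar> \<partial>M) < e"
    using conjugate_L1_continuous[OF assms] by blast
  have "\<bar>(\<integral>\<omega>. V (y * Z l \<omega> * Y \<omega>) \<partial>M) - (\<integral>\<omega>. V (y0 * Z l0 \<omega> * Y \<omega>) \<partial>M)\<bar> < e"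
    if "(y, l) \<in> W" "0 < y" "l \<in> \<Lambda>'" for y l
  proof -
    have "(\<integral>\<omega>. V (y * Z l \<omega> * Y \<omega>) \<partial>M) - (\<integral>\<omega>. V (y0 * Z l0 \<omega> * Y \<omega>) \<partial>M)
        = (\<integral>\<omega>. V (y * Z l \<omega> * Y \<omega>) - V (y0 * Z l0 \<omega> * Y \<omega>) \<partial>M)"
      by (rule Bochner_Integration.integral_diff[symmetric])
        (intro integrable_conjugate that(2,3) assms(1,2))+
    moreover have "\<bar>\<integral>\<omega>. V (y * Z l \<omega> * Y \<omega>) - V (y0 * Z l0 \<omega> * Y \<omega>) \<partial>M\<bar>
        \<le> (\<integral>\<omega>. \<bar>V (y * Z l \<omega> * Y \<omega>) - V (y0 * Z l0 \<omega> * Y \<omega>)\<bar> \<partial>M)"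
      using integral_norm_bound[of M "\<lambda>\<omega>. V (y * Z l \<omega> * Y \<omega>) - V (y0 * Z l0 \<omega> * Y \<omega>)"] by simp
    moreover have "(\<integral>\<omega>. \<bar>V (y * Z l \<omega> * Y \<omega>) - V (y0 * Z l0 \<omega> * Y \<omega>)\<bar> \<partial>M) < e"
      using bspec[OF W(3) that(1)] that(2,3) by simp
    ultimately show ?thesis by linarith
  qed
  then show ?thesis using W(1,2) by (intro exI[of _ W]) auto
qed

end

theorem lemma3p5:
  fixes M :: "'a measure" and \<tau> :: "'l topology"
    and Z :: "'l \<Rightarrow> 'a \<Rightarrow> real" and \<Lambda>' :: "'l set"
    and U :: "real \<Rightarrow> real" and Y :: "'a \<Rightarrow> real"
  assumes "prob_space M"
    and Z_meas: "\<And>l. l \<in> topspace \<tau> \<Longrightarrow> Z l \<in> borel_measurable M"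
    and Z_pos: "\<And>l \<omega>. l \<in> topspace \<tau> \<Longrightarrow> \<omega> \<in> space M \<Longrightarrow> Z l \<omega> > 0"
    and Z_exp: "\<And>l. l \<in> topspace \<tau> \<Longrightarrow> (\<integral>\<^sup>+ \<omega>. ennreal (Z l \<omega>) \<partial>M) \<le> 1"
    and U: "reasonably_elastic U"
    and sub: "\<Lambda>' \<subseteq> topspace \<tau>"
    and Vrc: "unif_integrable M ((\<lambda>l \<omega>. conjugate U (Z l \<omega>)) ` \<Lambda>')"
    and tau: "appropriate_topology M \<tau> Z"
    and Y_meas: "Y \<in> borel_measurable M"
    and Y_low: "\<exists>c>0. AE \<omega> in M. Y \<omega> \<ge> c"
    and sup_fin: "(SUP l\<in>\<Lambda>'. \<integral>\<^sup>+ \<omega>. ennreal (Z l \<omega> * Y \<omega>) \<partial>M) < \<infinity>"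
  shows "(\<forall>y>0. \<forall>l\<in>\<Lambda>'. integrable M (\<lambda>\<omega>. conjugate U (y * Z l \<omega> * Y \<omega>)))
     \<and> (\<forall>y0>0. \<forall>l0\<in>\<Lambda>'. \<forall>e>0. \<exists>W. openin (prod_topology euclideanreal \<tau>) W \<and> (y0, l0) \<in> W \<and>
          (\<forall>(y, l)\<in>W. y > 0 \<and> l \<in> \<Lambda>' \<longrightarrow>
             (\<integral>\<omega>. \<bar>conjugate U (y * Z l \<omega> * Y \<omega>) - conjugate U (y0 * Z l0 \<omega> * Y \<omega>)\<bar> \<partial>M) < e))
     \<and> (\<forall>y0>0. \<forall>l0\<in>\<Lambda>'. \<forall>e>0. \<exists>W. openin (prod_topology euclideanreal \<tau>) W \<and> (y0, l0) \<in> W \<and>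
          (\<forall>(y, l)\<in>W. y > 0 \<and> l \<in> \<Lambda>' \<longrightarrow>
             \<bar>(\<integral>\<omega>. conjugate U (y * Z l \<omega> * Y \<omega>) \<partial>M) - (\<integral>\<omega>. conjugate U (y0 * Z l0 \<omega> * Y \<omega>) \<partial>M)\<bar> < e))"
proof -
  obtain c where c: "0 < c" "AE \<omega> in M. c \<le> Y \<omega>" using Y_low by blast
  define S where "S = enn2real (SUP l\<in>\<Lambda>'. \<integral>\<^sup>+ \<omega>. ennreal (Z l \<omega> * Y \<omega>) \<partial>M)"
  have ZY_le: "(\<integral>\<^sup>+\<omega>. ennreal (Z l \<omega> * Y \<omega>) \<partial>M) \<le> ennreal S" if "l \<in> \<Lambda>'" for l
    using SUP_upper[OF that, of "\<lambda>l. \<integral>\<^sup>+ \<omega>. ennreal (Z l \<omega> * Y \<omega>) \<partial>M"] sup_fin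
    by (simp add: S_def)
  interpret conjugate_family U M \<tau> Z \<Lambda>' Y c S
    by (intro conjugate_family.intro reasonably_elastic_utility.intro conjugate_family_axioms.intro)
      (use assms c ZY_le in \<open>auto simp: S_def\<close>)
  show ?thesis
    by (intro conjI allI impI ballI integrable_conjugate conjugate_L1_continuous
        conjugate_expectation_continuous)
qed

end
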